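(* Let $\mathbb{K}$ be any field and $n$ a positive integer. Let $S$ be a linear subspace of $\mathrm{A}_n(\mathbb{K})$ such that $\dim S>3$ and every matrix of $S$ has rank at most $2$. Then $S$ is congruent to a subspace of $\mathrm{WA}_{n,1,1}(\mathbb{K})$.
   Context: $\mathrm{A}_n(\mathbb{K})$ is the space of $n\times n$ alternating matrices (skew-symmetric, zero diagonal). Subsets $\mathcal{V},\mathcal{W}$ of $\mathrm{M}_n(\mathbb{K})$ are congruent if $\mathcal{V}=P\mathcal{W}P^T$ for some $P\in\mathrm{GL}_n(\mathbb{K})$. $\mathrm{WA}_{n,1,1}(\mathbb{K})$ is the space of all $M=(m_{i,j})\in\mathrm{A}_n(\mathbb{K})$ with $m_{i,j}=0$ whenever $i>1$ and $j>1$ and $\max(i,j)>2$; equivalently the alternating matrices whose nonzero entries lie in the first row, the first column, or at positions $(1,2),(2,1)$ — i.e. all entries outside the first row and column vanish. *)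

theory Defs
  imports Jordan_Normal_Form.DL_Rank
begin

text \<open>Matrices are Jordan_Normal_Form matrices of dimension n x n; indices are 0-based,
so the paper's row/column 1 is index 0 and row/column 2 is index 1.\<close>

definition alt_mats :: "nat \<Rightarrow> 'a::field mat set" where
  "alt_mats n = {M \<in> carrier_mat n n. (\<forall>i<n. \<forall>j<n. M $$ (i,j) = - (M $$ (j,i))) \<and> (\<forall>i<n. M $$ (i,i) = 0)}"

definition WA_11 :: "nat \<Rightarrow> 'a::field mat set" where
  "WA_11 n = {M \<in> alt_mats n. \<forall>i<n. \<forall>j<n. i > 0 \<and> j > 0 \<and> max i j > 1 \<longrightarrow> M $$ (i,j) = 0}"

definition congruent_sets :: "nat \<Rightarrow> 'a::field mat set \<Rightarrow> 'a mat set \<Rightarrow> bool" where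
  "congruent_sets n V W \<longleftrightarrow> (\<exists>P \<in> carrier_mat n n. invertible_mat P \<and> V = (\<lambda>M. P * M * transpose_mat P) ` W)"

end

theory Submission
  imports Defs
begin

text \<open>
  An alternating matrix has rank at most 2 iff it is a wedge \<open>u v\<^sup>T - v u\<^sup>T\<close>, and in coordinates
  this is expressed by the Pl\<uuml>cker relations \<open>m\<^sub>i\<^sub>j m\<^sub>k\<^sub>l - m\<^sub>i\<^sub>k m\<^sub>j\<^sub>l + m\<^sub>i\<^sub>l m\<^sub>j\<^sub>k = 0\<close>.
  Scale some \<open>M \<in> S\<close> so that \<open>M\<^sub>p\<^sub>q = 1\<close>; then \<open>M\<close> is the wedge of its rows \<open>a\<close> and \<open>b\<close> with
  indices \<open>p\<close> and \<open>q\<close>. Polarizing the Pl\<uuml>cker relations between \<open>M\<close> and \<open>N \<in> S\<close> writes \<open>N\<close> as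
  \<open>wedge a y + wedge x b + N\<^sub>p\<^sub>q M\<close>, where the pairs \<open>(x, y)\<close> depend linearly on \<open>N\<close> and are
  proportional. A linear family of proportional pairs either satisfies one fixed relation
  \<open>s x + t y = 0\<close>, and then every \<open>N\<close> is \<open>wedge u v\<^sub>N\<close> with the fixed vector \<open>u = s a + t b\<close>,
  or all \<open>x\<close> and \<open>y\<close> lie on one line \<open>K y\<^sub>0\<close>, and then \<open>S\<close> is spanned by \<open>wedge a y\<^sub>0\<close>,
  \<open>wedge y\<^sub>0 b\<close> and \<open>M\<close>. The bound \<open>dim S > 3\<close> excludes the second case; in the first, a change
  of basis sending \<open>u\<close> to the first unit vector moves \<open>S\<close> into \<open>WA\<^sub>n\<^sub>,\<^sub>1\<^sub>,\<^sub>1\<close>.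
\<close>

definition wedge :: "'a::comm_ring_1 vec \<Rightarrow> 'a vec \<Rightarrow> 'a mat" where
  "wedge u v = mat (dim_vec u) (dim_vec u) (\<lambda>(k, l). u $ k * v $ l - u $ l * v $ k)"

lemma wedge_carrier [simp]: "u \<in> carrier_vec n \<Longrightarrow> wedge u v \<in> carrier_mat n n"
  by (simp add: wedge_def)

lemma dim_wedge [simp]: "dim_row (wedge u v) = dim_vec u" "dim_col (wedge u v) = dim_vec u"
  by (simp_all add: wedge_def)

lemma index_wedge [simp]:
  "k < dim_vec u \<Longrightarrow> l < dim_vec u \<Longrightarrow> wedge u v $$ (k, l) = u $ k * v $ l - u $ l * v $ k"
  by (simp add: wedge_def)

lemma mult_wedge_mult_transpose:
  assumes P: "P \<in> carrier_mat m n" and u: "u \<in> carrier_vec n" and v: "v \<in> carrier_vec n"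
  shows "P * wedge u v * transpose_mat P = wedge (P *\<^sub>v u) (P *\<^sub>v v)"
proof (rule eq_matI)
  fix i j assume "i < dim_row (wedge (P *\<^sub>v u) (P *\<^sub>v v))" "j < dim_col (wedge (P *\<^sub>v u) (P *\<^sub>v v))"
  with P u have i: "i < m" and j: "j < m" by auto
  have PW: "(P * wedge u v) $$ (i, l) = (P *\<^sub>v u) $ i * v $ l - u $ l * (P *\<^sub>v v) $ i" if l: "l < n" for l
  proof -
    have "(P * wedge u v) $$ (i, l) = (\<Sum>k<n. P $$ (i, k) * (u $ k * v $ l - u $ l * v $ k))"
      using P u i l by (auto simp: scalar_prod_def lessThan_atLeast0 intro!: sum.cong)
    also have "\<dots> = (P *\<^sub>v u) $ i * v $ l - u $ l * (P *\<^sub>v v) $ i"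
      using P u v i by (simp add: scalar_prod_def lessThan_atLeast0 algebra_simps sum_subtractf
          sum_distrib_left sum_distrib_right)
    finally show ?thesis .
  qed
  have "(P * wedge u v * transpose_mat P) $$ (i, j) = (\<Sum>l<n. (P * wedge u v) $$ (i, l) * P $$ (j, l))"
    using P u i j by (auto simp: scalar_prod_def lessThan_atLeast0 intro!: sum.cong)
  also have "\<dots> = (\<Sum>l<n. (P *\<^sub>v u) $ i * (P $$ (j, l) * v $ l) - (P *\<^sub>v v) $ i * (P $$ (j, l) * u $ l))"
    by (rule sum.cong) (simp_all add: PW algebra_simps)
  also have "\<dots> = (P *\<^sub>v u) $ i * (P *\<^sub>v v) $ j - (P *\<^sub>v u) $ j * (P *\<^sub>v v) $ i"
    using P u v j by (simp add: sum_subtractf flip: sum_distrib_left)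
      (simp add: scalar_prod_def lessThan_atLeast0)
  finally show "(P * wedge u v * transpose_mat P) $$ (i, j) = wedge (P *\<^sub>v u) (P *\<^sub>v v) $$ (i, j)"
    using P i j by simp
qed (use P u in auto)

lemma wedge_unit_vec_0_in_WA_11:
  "w \<in> carrier_vec n \<Longrightarrow> wedge (unit_vec n 0) w \<in> WA_11 n"
  unfolding WA_11_def alt_mats_def by auto

lemma exists_invertible_mult_vec_eq_unit_vec_0:
  fixes u :: "'a::field vec"
  assumes u: "u \<in> carrier_vec n" and nz: "u \<noteq> 0\<^sub>v n"
  obtains Q where "Q \<in> carrier_mat n n" "invertible_mat Q" "Q *\<^sub>v u = unit_vec n 0"
proof -
  \<comment> \<open>the reduced row echelon form of the nonzero column \<open>u\<close> is the first unit vector\<close>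
  let ?A = "mat_of_cols n [u]"
  have A: "?A \<in> carrier_mat n 1" using mat_of_cols_carrier(1)[of n "[u]"] by simp
  obtain Q R where C: "gauss_jordan_single ?A = Q * ?A" and Q: "Q \<in> carrier_mat n n"
    and R: "R \<in> carrier_mat n n" and QR: "Q * R = 1\<^sub>m n" and RQ: "R * Q = 1\<^sub>m n"
    using gauss_jordan_single(4)[OF A refl] by blast
  obtain f where f: "pivot_fun (Q * ?A) f 1"
    using gauss_jordan_single(3)[OF A refl] unfolding C row_echelon_form_def using Q by auto
  define w where "w = Q *\<^sub>v u"
  have w: "w \<in> carrier_vec n" using Q u unfolding w_def by simp
  have Cw: "(Q * ?A) $$ (i, 0) = w $ i" if "i < n" for i
    using Q u that unfolding w_def by (simp add: mat_of_cols_def scalar_prod_def)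
  have "w \<noteq> 0\<^sub>v n"
  proof
    assume "w = 0\<^sub>v n"
    hence "R *\<^sub>v w = 0\<^sub>v n" using R by auto
    moreover have "R *\<^sub>v w = u" using R Q u RQ unfolding w_def by (simp flip: assoc_mult_mat_vec)
    ultimately show False using nz by simp
  qed
  then obtain i where i: "i < n" "w $ i \<noteq> 0" using w by (metis carrier_vecD eq_vecI index_zero_vec)
  have dim: "dim_row (Q * ?A) = n" using Q by simp
  have pf: "\<forall>k<n. f k \<le> 1 \<and>
      (f k < 1 \<longrightarrow> (Q * ?A) $$ (k, f k) = 1 \<and> (\<forall>k'<n. k' \<noteq> k \<longrightarrow> (Q * ?A) $$ (k', f k) = 0)) \<and>
      (\<forall>j<f k. (Q * ?A) $$ (k, j) = 0) \<and> (Suc k < n \<longrightarrow> f (Suc k) > f k \<or> f (Suc k) = 1)"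
    using f unfolding pivot_fun_def Let_def dim .
  have f_le: "f k \<le> 1" and f_step: "Suc k < n \<Longrightarrow> f k < f (Suc k) \<or> f (Suc k) = 1"
    and f_zero: "j < f k \<Longrightarrow> (Q * ?A) $$ (k, j) = 0"
    if "k < n" for k j
    using pf that by blast+
  have f_pivot: "f k = 0 \<Longrightarrow> (Q * ?A) $$ (k, 0) = 1 \<and> (\<forall>k'<n. k' \<noteq> k \<longrightarrow> (Q * ?A) $$ (k', 0) = 0)"
    if "k < n" for k
    using pf that by (metis less_one)
  have "f 0 = 0"
  proof (rule ccontr)
    assume "f 0 \<noteq> 0"
    hence "f k = 1" if "k < n" for k
      using that
    proof (induction k)
      case (Suc k)
      then show ?case using f_le[of "Suc k"] f_step[of k] by simp
    qed (use f_le[of 0] in simp)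
    hence "(Q * ?A) $$ (i, 0) = 0" using f_zero i(1) by simp
    thus False using Cw i by simp
  qed
  hence "w = unit_vec n 0" using f_pivot[of 0] w Cw i(1) by (intro eq_vecI) auto
  moreover have "invertible_mat Q"
    using Q R QR RQ unfolding invertible_mat_def inverts_mat_def square_mat.simps by auto
  ultimately show ?thesis using that Q unfolding w_def by blast
qed

lemma congruent_sets_image:
  fixes Q :: "'a::field mat"
  assumes Q: "Q \<in> carrier_mat n n" "invertible_mat Q" and S: "S \<subseteq> carrier_mat n n"
  shows "congruent_sets n S ((\<lambda>M. Q * M * transpose_mat Q) ` S)"
proof -
  obtain P where QP: "Q * P = 1\<^sub>m n" and PQ: "P * Q = 1\<^sub>m (dim_row P)"
    using Q unfolding invertible_mat_def inverts_mat_def by auto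
  have "dim_col P = n" "dim_row P = n"
    using arg_cong[OF QP, of dim_col] arg_cong[OF PQ, of dim_col] Q(1) by simp_all
  hence P: "P \<in> carrier_mat n n" by blast
  have inv: "invertible_mat P"
    using P Q QP PQ unfolding invertible_mat_def inverts_mat_def by auto
  have PQ_cancel: "P * (Q * M * transpose_mat Q) * transpose_mat P = M" if M: "M \<in> carrier_mat n n" for M
  proof -
    have "P * (Q * M * transpose_mat Q) * transpose_mat P = (P * Q) * M * (transpose_mat Q * transpose_mat P)"
      using P Q(1) M by (simp add: assoc_mult_mat[of _ n n _ n _ n])
    also have "transpose_mat Q * transpose_mat P = transpose_mat (P * Q)"
      using transpose_mult[OF P Q(1)] by simp
    finally show ?thesis using PQ P M by (simp add: carrier_matD)
  qed
  have "(\<lambda>M. P * M * transpose_mat P) ` (\<lambda>M. Q * M * transpose_mat Q) ` S = (\<lambda>M. M) ` S"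
    unfolding image_image using S PQ_cancel by (intro image_cong) auto
  hence "S = (\<lambda>M. P * M * transpose_mat P) ` (\<lambda>M. Q * M * transpose_mat Q) ` S" by simp
  thus ?thesis unfolding congruent_sets_def using P inv by blast
qed

lemma congruent_to_WA_11_if_wedge_family:
  fixes u :: "'a::field vec"
  assumes u: "u \<in> carrier_vec n" "u \<noteq> 0\<^sub>v n" and S: "\<forall>N\<in>S. \<exists>v\<in>carrier_vec n. N = wedge u v"
  shows "\<exists>W. W \<subseteq> WA_11 n \<and> congruent_sets n S W"
proof -
  obtain Q where Q: "Q \<in> carrier_mat n n" "invertible_mat Q" and Qu: "Q *\<^sub>v u = unit_vec n 0"
    using exists_invertible_mult_vec_eq_unit_vec_0[OF u] .
  have "S \<subseteq> carrier_mat n n" using S u(1) by auto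
  moreover have "Q * N * transpose_mat Q \<in> WA_11 n" if "N \<in> S" for N
  proof -
    obtain v where v: "v \<in> carrier_vec n" and N: "N = wedge u v" using S \<open>N \<in> S\<close> by blast
    have "Q * N * transpose_mat Q = wedge (unit_vec n 0) (Q *\<^sub>v v)"
      unfolding N mult_wedge_mult_transpose[OF Q(1) u(1) v] Qu ..
    thus ?thesis using Q(1) v by (simp add: wedge_unit_vec_0_in_WA_11)
  qed
  ultimately show ?thesis using congruent_sets_image[OF Q] by (intro exI[of _ "(\<lambda>M. Q * M * transpose_mat Q) ` S"]) auto
qed

lemma rank_le_2_three_cols_dependent:
  fixes M :: "'a::field mat"
  assumes M: "M \<in> carrier_mat n nc" and rk: "vec_space.rank n M \<le> 2"
    and ijk: "i < nc" "j < nc" "k < nc"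
  obtains x y z where "x \<noteq> 0 \<or> y \<noteq> 0 \<or> z \<noteq> 0"
    and "\<And>r. r < n \<Longrightarrow> x * M $$ (r, i) + y * M $$ (r, j) + z * M $$ (r, k) = 0"
proof (cases "distinct [col M i, col M j, col M k]")
  case False
  have col_eq: "M $$ (r, a) = M $$ (r, b)" if "col M a = col M b" "r < n" "a < nc" "b < nc" for a b r
  proof -
    have "M $$ (r, a) = col M a $ r" using that(2,3) M by simp
    also have "\<dots> = col M b $ r" using that(1) by (simp only:)
    also have "\<dots> = M $$ (r, b)" using that(2,4) M by simp
    finally show ?thesis .
  qed
  from False consider "col M i = col M j" | "col M i = col M k" | "col M j = col M k" by auto
  then show ?thesis
  proof cases
    case 1 show ?thesis by (rule that[of 1 "-1" 0]) (use col_eq[OF 1] ijk in auto)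
  next
    case 2 show ?thesis by (rule that[of 1 0 "-1"]) (use col_eq[OF 2] ijk in auto)
  next
    case 3 show ?thesis by (rule that[of 0 1 "-1"]) (use col_eq[OF 3] ijk in auto)
  qed
next
  case True
  interpret V: vec_space "TYPE('a)" n .
  let ?cs = "[col M i, col M j, col M k]"
  let ?C = "mat_of_cols n ?cs"
  have cs: "set ?cs \<subseteq> carrier_vec n" using M by auto
  have C: "?C \<in> carrier_mat n 3" using mat_of_cols_carrier(1)[of n ?cs] by (simp add: numeral_3_eq_3)
  have "V.lin_dep (set ?cs)"
  proof (rule ccontr)
    assume "\<not> V.lin_dep (set ?cs)"
    moreover have "set ?cs \<subseteq> set (cols M)" using M ijk by (auto simp: cols_def)
    ultimately have "card (set ?cs) \<le> V.rank M" using V.rank_ge_card_indpt[OF M] by blast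
    thus False using rk distinct_card[OF True] by simp
  qed
  then obtain v where v: "v \<in> carrier_vec 3" "v \<noteq> 0\<^sub>v 3" and Cv: "?C *\<^sub>v v = 0\<^sub>v n"
    using V.lin_depE[OF C] True cols_mat_of_cols[OF cs] by metis
  show ?thesis
  proof (rule that[of "v $ 0" "v $ 1" "v $ 2"])
    show "v $ 0 \<noteq> 0 \<or> v $ 1 \<noteq> 0 \<or> v $ 2 \<noteq> 0"
    proof (rule ccontr)
      assume "\<not> ?thesis"
      hence "v = 0\<^sub>v 3"
        using v(1) by (intro eq_vecI) (auto simp: less_Suc_eq numeral_3_eq_3 numeral_2_eq_2)
      thus False using v(2) by simp
    qed
  next
    fix r assume r: "r < n"
    have "(?C *\<^sub>v v) $ r = 0" using Cv r by simp
    thus "v $ 0 * M $$ (r, i) + v $ 1 * M $$ (r, j) + v $ 2 * M $$ (r, k) = 0"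
      using r v M ijk by (simp add: mat_of_cols_def scalar_prod_def numeral_3_eq_3 numeral_2_eq_2 ac_simps)
  qed
qed

lemma alternating_rank_le_2_pluecker:
  fixes M :: "'a::field mat"
  assumes M: "M \<in> alt_mats n" and rk: "vec_space.rank n M \<le> 2"
    and ijkl: "i < n" "j < n" "k < n" "l < n"
  shows "M $$ (i, j) * M $$ (k, l) - M $$ (i, k) * M $$ (j, l) + M $$ (i, l) * M $$ (j, k) = 0"
proof -
  have Mc: "M \<in> carrier_mat n n" and skew: "\<And>a b. a < n \<Longrightarrow> b < n \<Longrightarrow> M $$ (a, b) = - M $$ (b, a)"
    and diag: "\<And>a. a < n \<Longrightarrow> M $$ (a, a) = 0"
    using M unfolding alt_mats_def by blast+
  obtain x y z where xyz: "x \<noteq> 0 \<or> y \<noteq> 0 \<or> z \<noteq> 0"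
    and dep: "\<And>r. r < n \<Longrightarrow> x * M $$ (r, j) + y * M $$ (r, k) + z * M $$ (r, l) = 0"
    using rank_le_2_three_cols_dependent[OF Mc rk ijkl(2-4)] by blast
  have Ri: "x * M $$ (i, j) + y * M $$ (i, k) + z * M $$ (i, l) = 0" using dep ijkl by simp
  have Rj: "y * M $$ (j, k) + z * M $$ (j, l) = 0" using dep[of j] ijkl diag by simp
  have Rk: "- x * M $$ (j, k) + z * M $$ (k, l) = 0" using dep[of k] ijkl diag skew[of k j] by simp
  have Rl: "- x * M $$ (j, l) - y * M $$ (k, l) = 0" using dep[of l] ijkl diag skew[of l j] skew[of l k] by simp
  define P where "P = M $$ (i, j) * M $$ (k, l) - M $$ (i, k) * M $$ (j, l) + M $$ (i, l) * M $$ (j, k)"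
  have "x * P = M $$ (k, l) * (x * M $$ (i, j) + y * M $$ (i, k) + z * M $$ (i, l))
      + M $$ (i, k) * (- x * M $$ (j, l) - y * M $$ (k, l)) - M $$ (i, l) * (- x * M $$ (j, k) + z * M $$ (k, l))"
    "y * P = - M $$ (j, l) * (x * M $$ (i, j) + y * M $$ (i, k) + z * M $$ (i, l))
      - M $$ (i, j) * (- x * M $$ (j, l) - y * M $$ (k, l)) + M $$ (i, l) * (y * M $$ (j, k) + z * M $$ (j, l))"
    "z * P = M $$ (j, k) * (x * M $$ (i, j) + y * M $$ (i, k) + z * M $$ (i, l))
      + M $$ (i, j) * (- x * M $$ (j, k) + z * M $$ (k, l)) - M $$ (i, k) * (y * M $$ (j, k) + z * M $$ (j, l))"
    unfolding P_def by (simp_all add: algebra_simps)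
  hence "x * P = 0" "y * P = 0" "z * P = 0" using Ri Rj Rk Rl by simp_all
  thus ?thesis using xyz unfolding P_def by auto
qed

locale dependent_pair_family =
  fixes S :: "'b set" and n :: nat and X Y :: "'b \<Rightarrow> nat \<Rightarrow> 'a::field" and add :: "'b \<Rightarrow> 'b \<Rightarrow> 'b"
  assumes dependent: "N \<in> S \<Longrightarrow> k < n \<Longrightarrow> l < n \<Longrightarrow> X N k * Y N l = X N l * Y N k"
    and add_closed: "N \<in> S \<Longrightarrow> N' \<in> S \<Longrightarrow> add N N' \<in> S"
    and X_add: "N \<in> S \<Longrightarrow> N' \<in> S \<Longrightarrow> k < n \<Longrightarrow> X (add N N') k = X N k + X N' k"
    and Y_add: "N \<in> S \<Longrightarrow> N' \<in> S \<Longrightarrow> k < n \<Longrightarrow> Y (add N N') k = Y N k + Y N' k"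
begin

lemma swap: "dependent_pair_family S n Y X add"
proof
  show "Y N k * X N l = Y N l * X N k" if "N \<in> S" "k < n" "l < n" for N k l
    using dependent[OF that] by (simp only: mult.commute)
qed (simp_all add: add_closed X_add Y_add)

lemma polar:
  assumes N0: "N0 \<in> S" "r < n" "X N0 r \<noteq> 0" and N: "N \<in> S" and k: "k < n"
  shows "Y N0 r * X N k - X N0 r * Y N k = ((Y N0 r * X N r - X N0 r * Y N r) / X N0 r) * X N0 k"
proof -
  define \<sigma> \<tau> where "\<sigma> = X N0 r" and "\<tau> = Y N0 r"
  have \<sigma>: "\<sigma> \<noteq> 0" using N0 unfolding \<sigma>_def by simp
  have "(X N k + X N0 k) * (Y N r + Y N0 r) = (X N r + X N0 r) * (Y N k + Y N0 k)"
    using dependent[OF add_closed[OF N N0(1)] k N0(2)] X_add[OF N N0(1)] Y_add[OF N N0(1)] k N0(2) by simp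
  moreover have "X N k * Y N r = X N r * Y N k" "X N0 k * Y N0 r = X N0 r * Y N0 k"
    using dependent N0 N k by blast+
  ultimately have "X N k * \<tau> + X N0 k * Y N r = X N r * Y N0 k + \<sigma> * Y N k"
    unfolding \<sigma>_def \<tau>_def by (simp add: algebra_simps)
  hence "\<tau> * X N k - \<sigma> * Y N k = X N r * Y N0 k - X N0 k * Y N r"
    by (simp add: field_simps)
  hence "\<sigma> * (\<tau> * X N k - \<sigma> * Y N k) = \<sigma> * (X N r * Y N0 k - X N0 k * Y N r)"
    by simp
  also have "\<dots> = X N r * (\<sigma> * Y N0 k) - \<sigma> * X N0 k * Y N r"
    by (simp add: algebra_simps)
  also have "\<sigma> * Y N0 k = \<tau> * X N0 k"
    using dependent[OF N0(1) k N0(2)] unfolding \<sigma>_def \<tau>_def by (simp add: ac_simps)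
  also have "X N r * (\<tau> * X N0 k) - \<sigma> * X N0 k * Y N r = \<sigma> * (((\<tau> * X N r - \<sigma> * Y N r) / \<sigma>) * X N0 k)"
    using \<sigma> by (simp add: field_simps)
  finally have "\<sigma> * (\<tau> * X N k - \<sigma> * Y N k) = \<sigma> * (((\<tau> * X N r - \<sigma> * Y N r) / \<sigma>) * X N0 k)" .
  hence "\<tau> * X N k - \<sigma> * Y N k = ((\<tau> * X N r - \<sigma> * Y N r) / \<sigma>) * X N0 k"
    using \<sigma> by (simp only: mult_cancel_left simp_thms)
  thus ?thesis unfolding \<sigma>_def \<tau>_def .
qed

lemma proportional_if_polar_nonzero:
  assumes N0: "N0 \<in> S" "r < n" "X N0 r \<noteq> 0" and N: "N \<in> S" and k: "k < n"
    and nz: "Y N0 r * X N r - X N0 r * Y N r \<noteq> 0"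
  shows "X N k = (X N r / X N0 r) * X N0 k"
proof -
  define \<sigma> \<tau> lam where "\<sigma> = X N0 r" and "\<tau> = Y N0 r" and "lam = (\<tau> * X N r - \<sigma> * Y N r) / \<sigma>"
  have \<sigma>: "\<sigma> \<noteq> 0" and lam: "lam \<noteq> 0" using N0 nz unfolding \<sigma>_def \<tau>_def lam_def by simp_all
  have rk: "X N k * (\<sigma> * Y N r) = X N r * (\<sigma> * Y N k)"
    using dependent[OF N k N0(2)] by (simp add: algebra_simps)
  have lam_eq: "\<tau> * X N j - \<sigma> * Y N j = lam * X N0 j" if "j < n" for j
    unfolding \<sigma>_def \<tau>_def lam_def by (rule polar[OF N0 N that])
  have Yk: "\<sigma> * Y N k = \<tau> * X N k - lam * X N0 k" and Yr: "\<sigma> * Y N r = \<tau> * X N r - lam * \<sigma>"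
    using lam_eq[OF k] lam_eq[OF N0(2)] unfolding \<sigma>_def by (simp_all add: algebra_simps)
  have "lam * (\<sigma> * X N k) = \<tau> * (X N k * X N r) - X N k * (\<tau> * X N r - lam * \<sigma>)"
    by (simp add: algebra_simps)
  also have "\<dots> = \<tau> * (X N k * X N r) - X N r * (\<tau> * X N k - lam * X N0 k)"
    using rk unfolding Yk Yr by simp
  also have "\<dots> = lam * (X N r * X N0 k)"
    by (simp add: algebra_simps)
  finally have "lam * (\<sigma> * X N k) = lam * (X N r * X N0 k)" .
  thus ?thesis using lam \<sigma> unfolding \<sigma>_def by (simp add: field_simps)
qed

lemma common_relation_or_common_line_at:
  assumes N0: "N0 \<in> S" "r < n" "X N0 r \<noteq> 0"
  shows "(\<exists>s t. t \<noteq> 0 \<and> (\<forall>N\<in>S. \<forall>k<n. s * X N k + t * Y N k = 0))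
    \<or> (\<forall>N\<in>S. \<exists>\<alpha> \<beta>. \<forall>k<n. X N k = \<alpha> * X N0 k \<and> Y N k = \<beta> * X N0 k)"
proof -
  define lam where "lam N = (Y N0 r * X N r - X N0 r * Y N r) / X N0 r" for N
  have lam: "Y N0 r * X N k - X N0 r * Y N k = lam N * X N0 k" if "N \<in> S" "k < n" for N k
    unfolding lam_def by (rule polar[OF N0 that])
  have lam_add: "lam (add N N') = lam N + lam N'" if "N \<in> S" "N' \<in> S" for N N'
    using X_add[OF that N0(2)] Y_add[OF that N0(2)] N0(3) unfolding lam_def by (simp add: field_simps)
  show ?thesis
  proof (cases "\<forall>N\<in>S. lam N = 0")
    case True
    hence "\<forall>N\<in>S. \<forall>k<n. Y N0 r * X N k + (- X N0 r) * Y N k = 0" using lam by simp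
    thus ?thesis using N0(3) by (intro disjI1 exI[of _ "Y N0 r"] exI[of _ "- X N0 r"]) simp
  next
    case False
    then obtain N1 where N1: "N1 \<in> S" "lam N1 \<noteq> 0" by blast
    have X_prop: "X N k = (X N r / X N0 r) * X N0 k" if "N \<in> S" "lam N \<noteq> 0" "k < n" for N k
      using proportional_if_polar_nonzero[OF N0 that(1,3)] that(2) unfolding lam_def by simp
    have X_line: "\<exists>\<alpha>. \<forall>k<n. X N k = \<alpha> * X N0 k" if N: "N \<in> S" for N
    proof (cases "lam N = 0")
      case False
      thus ?thesis using X_prop[OF N] by blast
    next
      case True
      \<comment> \<open>then \<open>lam (N + N1) = lam N1 \<noteq> 0\<close>, and \<open>X N = X (N + N1) - X N1\<close>\<close>
      hence "lam (add N N1) \<noteq> 0" using lam_add[OF N N1(1)] N1(2) by simp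
      hence "\<forall>k<n. X N k = (X (add N N1) r / X N0 r - X N1 r / X N0 r) * X N0 k"
        using X_prop[OF add_closed[OF N N1(1)]] X_prop[OF N1] X_add[OF N N1(1)] by (simp add: algebra_simps)
      thus ?thesis by blast
    qed
    show ?thesis
    proof (intro disjI2 ballI)
      fix N assume N: "N \<in> S"
      then obtain \<alpha> where \<alpha>: "\<forall>k<n. X N k = \<alpha> * X N0 k" using X_line by blast
      have "\<forall>k<n. Y N k = ((Y N0 r * \<alpha> - lam N) / X N0 r) * X N0 k"
        using lam[OF N] \<alpha> N0(3) by (simp add: field_simps)
      thus "\<exists>\<alpha> \<beta>. \<forall>k<n. X N k = \<alpha> * X N0 k \<and> Y N k = \<beta> * X N0 k" using \<alpha> by blast
    qed
  qed
qed

lemma common_relation_or_common_line: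
  "(\<exists>s t. (s \<noteq> 0 \<or> t \<noteq> 0) \<and> (\<forall>N\<in>S. \<forall>k<n. s * X N k + t * Y N k = 0))
    \<or> (\<exists>y. \<forall>N\<in>S. \<exists>\<alpha> \<beta>. \<forall>k<n. X N k = \<alpha> * y k \<and> Y N k = \<beta> * y k)"
proof (cases "\<exists>N0\<in>S. \<exists>r<n. X N0 r \<noteq> 0 \<or> Y N0 r \<noteq> 0")
  case False
  hence "\<forall>N\<in>S. \<forall>k<n. 1 * X N k + 0 * Y N k = 0" by simp
  thus ?thesis by (intro disjI1 exI[of _ 1] exI[of _ 0]) simp
next
  case True
  then obtain N0 r where N0: "N0 \<in> S" "r < n" and nz: "X N0 r \<noteq> 0 \<or> Y N0 r \<noteq> 0" by blast
  show ?thesis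
  proof (cases "X N0 r = 0")
    case False
    from common_relation_or_common_line_at[OF N0 False] show ?thesis
    proof
      assume "\<exists>s t. t \<noteq> 0 \<and> (\<forall>N\<in>S. \<forall>k<n. s * X N k + t * Y N k = 0)"
      thus ?thesis by (intro disjI1) blast
    qed (intro disjI2 exI[of _ "X N0"])
  next
    case True
    hence Y0: "Y N0 r \<noteq> 0" using nz by simp
    from dependent_pair_family.common_relation_or_common_line_at[OF swap N0 Y0] show ?thesis
    proof
      assume "\<exists>s t. t \<noteq> 0 \<and> (\<forall>N\<in>S. \<forall>k<n. s * Y N k + t * X N k = 0)"
      then obtain s t where t: "t \<noteq> 0" and st: "\<forall>N\<in>S. \<forall>k<n. s * Y N k + t * X N k = 0" by blast
      from st have "\<forall>N\<in>S. \<forall>k<n. t * X N k + s * Y N k = 0" by (simp add: add.commute)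
      thus ?thesis using t by (intro disjI1) blast
    next
      assume "\<forall>N\<in>S. \<exists>\<alpha> \<beta>. \<forall>k<n. Y N k = \<alpha> * Y N0 k \<and> X N k = \<beta> * Y N0 k"
      hence "\<forall>N\<in>S. \<exists>\<alpha> \<beta>. \<forall>k<n. X N k = \<alpha> * Y N0 k \<and> Y N k = \<beta> * Y N0 k" by blast
      thus ?thesis by (intro disjI2 exI[of _ "Y N0"])
    qed
  qed
qed

end

locale alternating_pluecker_space =
  fixes n :: nat and S :: "'a::field mat set"
  assumes carrier: "S \<subseteq> carrier_mat n n"
    and add_closed: "A \<in> S \<Longrightarrow> B \<in> S \<Longrightarrow> A + B \<in> S"
    and smult_closed: "A \<in> S \<Longrightarrow> c \<cdot>\<^sub>m A \<in> S"
    and skew: "A \<in> S \<Longrightarrow> i < n \<Longrightarrow> j < n \<Longrightarrow> A $$ (i, j) = - A $$ (j, i)"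
    and diag: "A \<in> S \<Longrightarrow> i < n \<Longrightarrow> A $$ (i, i) = 0"
    and pluecker: "A \<in> S \<Longrightarrow> i < n \<Longrightarrow> j < n \<Longrightarrow> k < n \<Longrightarrow> l < n \<Longrightarrow>
      A $$ (i, j) * A $$ (k, l) - A $$ (i, k) * A $$ (j, l) + A $$ (i, l) * A $$ (j, k) = 0"
begin

lemma index_add [simp]: "A \<in> S \<Longrightarrow> B \<in> S \<Longrightarrow> i < n \<Longrightarrow> j < n \<Longrightarrow> (A + B) $$ (i, j) = A $$ (i, j) + B $$ (i, j)"
  using carrier by auto

lemma pluecker_polar:
  assumes A: "A \<in> S" and B: "B \<in> S" and ijkl: "i < n" "j < n" "k < n" "l < n"
  shows "A $$ (i, j) * B $$ (k, l) + B $$ (i, j) * A $$ (k, l) - A $$ (i, k) * B $$ (j, l)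
    - B $$ (i, k) * A $$ (j, l) + A $$ (i, l) * B $$ (j, k) + B $$ (i, l) * A $$ (j, k) = 0"
proof -
  have "A $$ (i, j) * B $$ (k, l) + B $$ (i, j) * A $$ (k, l) - A $$ (i, k) * B $$ (j, l)
      - B $$ (i, k) * A $$ (j, l) + A $$ (i, l) * B $$ (j, k) + B $$ (i, l) * A $$ (j, k)
    = ((A $$ (i, j) + B $$ (i, j)) * (A $$ (k, l) + B $$ (k, l))
        - (A $$ (i, k) + B $$ (i, k)) * (A $$ (j, l) + B $$ (j, l))
        + (A $$ (i, l) + B $$ (i, l)) * (A $$ (j, k) + B $$ (j, k)))
      - (A $$ (i, j) * A $$ (k, l) - A $$ (i, k) * A $$ (j, l) + A $$ (i, l) * A $$ (j, k))
      - (B $$ (i, j) * B $$ (k, l) - B $$ (i, k) * B $$ (j, l) + B $$ (i, l) * B $$ (j, k))"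
    by (simp add: algebra_simps)
  thus ?thesis
    using pluecker[OF add_closed[OF A B] ijkl] pluecker[OF A ijkl] pluecker[OF B ijkl] A B ijkl by simp
qed

end

locale normalized_pluecker_space = alternating_pluecker_space +
  fixes M :: "'a::field mat" and p q :: nat
  assumes M: "M \<in> S" and p: "p < n" and q: "q < n" and M_pq: "M $$ (p, q) = 1"
begin

text \<open>The vectors \<open>x\<close> and \<open>y\<close> of the decomposition \<open>N = wedge a y + wedge x b + N\<^sub>p\<^sub>q M\<close>: rows \<open>p\<close>
  and \<open>q\<close> of \<open>N - N\<^sub>p\<^sub>q M\<close>.\<close>

definition X :: "'a mat \<Rightarrow> nat \<Rightarrow> 'a" where "X N k = N $$ (p, k) - N $$ (p, q) * M $$ (p, k)"

definition Y :: "'a mat \<Rightarrow> nat \<Rightarrow> 'a" where "Y N k = N $$ (q, k) - N $$ (p, q) * M $$ (q, k)"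

lemma index_M_wedge_rows: "k < n \<Longrightarrow> l < n \<Longrightarrow> M $$ (k, l) = M $$ (p, k) * M $$ (q, l) - M $$ (p, l) * M $$ (q, k)"
  using pluecker[OF M p q] M_pq by (simp add: algebra_simps)

lemma pluecker_polar_M:
  "N \<in> S \<Longrightarrow> k < n \<Longrightarrow> l < n \<Longrightarrow> N $$ (k, l) + N $$ (p, q) * M $$ (k, l)
    - M $$ (p, k) * N $$ (q, l) - N $$ (p, k) * M $$ (q, l) + M $$ (p, l) * N $$ (q, k) + N $$ (p, l) * M $$ (q, k) = 0"
  using pluecker_polar[OF M _ p q] M_pq by simp

lemma decomposition:
  assumes N: "N \<in> S" and kl: "k < n" "l < n"
  shows "N $$ (k, l) = M $$ (p, k) * Y N l - M $$ (p, l) * Y N k + X N k * M $$ (q, l) - X N l * M $$ (q, k)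
    + N $$ (p, q) * M $$ (k, l)"
proof -
  have "N $$ (k, l) = M $$ (p, k) * N $$ (q, l) + N $$ (p, k) * M $$ (q, l) - M $$ (p, l) * N $$ (q, k)
      - N $$ (p, l) * M $$ (q, k) - N $$ (p, q) * M $$ (k, l)"
    using pluecker_polar_M[OF N kl] by (simp add: field_simps)
  also have "\<dots> = M $$ (p, k) * N $$ (q, l) + N $$ (p, k) * M $$ (q, l) - M $$ (p, l) * N $$ (q, k)
      - N $$ (p, l) * M $$ (q, k) - 2 * N $$ (p, q) * (M $$ (p, k) * M $$ (q, l) - M $$ (p, l) * M $$ (q, k))
      + N $$ (p, q) * M $$ (k, l)"
    using index_M_wedge_rows[OF kl] by simp
  also have "\<dots> = M $$ (p, k) * Y N l - M $$ (p, l) * Y N k + X N k * M $$ (q, l) - X N l * M $$ (q, k)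
      + N $$ (p, q) * M $$ (k, l)"
    unfolding X_def Y_def by (simp add: algebra_simps)
  finally show ?thesis .
qed

lemma X_Y_dependent:
  assumes N: "N \<in> S" and kl: "k < n" "l < n"
  shows "X N k * Y N l = X N l * Y N k"
proof -
  have "X N k * Y N l - X N l * Y N k
    = N $$ (p, q) * (N $$ (k, l) + N $$ (p, q) * M $$ (k, l) - M $$ (p, k) * N $$ (q, l)
        - N $$ (p, k) * M $$ (q, l) + M $$ (p, l) * N $$ (q, k) + N $$ (p, l) * M $$ (q, k))
      - (N $$ (p, q) * N $$ (k, l) - N $$ (p, k) * N $$ (q, l) + N $$ (p, l) * N $$ (q, k))
      - N $$ (p, q) * N $$ (p, q) * (M $$ (k, l) - M $$ (p, k) * M $$ (q, l) + M $$ (p, l) * M $$ (q, k))"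
    unfolding X_def Y_def by (simp add: algebra_simps)
  also have "\<dots> = 0"
    using pluecker_polar_M[OF N kl] pluecker[OF N p q kl] index_M_wedge_rows[OF kl] by simp
  finally show ?thesis by simp
qed

lemma X_add: "A \<in> S \<Longrightarrow> B \<in> S \<Longrightarrow> k < n \<Longrightarrow> X (A + B) k = X A k + X B k"
  unfolding X_def using p q by (simp add: algebra_simps)

lemma Y_add: "A \<in> S \<Longrightarrow> B \<in> S \<Longrightarrow> k < n \<Longrightarrow> Y (A + B) k = Y A k + Y B k"
  unfolding Y_def using p q by (simp add: algebra_simps)

sublocale pairs: dependent_pair_family S n X Y "(+)"
  by unfold_locales (use X_Y_dependent add_closed X_add Y_add in auto)

lemma decomposition_wedge_rows:
  assumes N: "N \<in> S" and kl: "k < n" "l < n"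
  shows "N $$ (k, l) = M $$ (p, k) * Y N l - M $$ (p, l) * Y N k + X N k * M $$ (q, l) - X N l * M $$ (q, k)
    + N $$ (p, q) * (M $$ (p, k) * M $$ (q, l) - M $$ (p, l) * M $$ (q, k))"
  using decomposition[OF N kl] index_M_wedge_rows[OF kl] by simp

lemma eq_wedge_if_dependent:
  assumes N: "N \<in> S" and s: "s \<noteq> 0" and dep: "\<forall>k<n. s * X N k + t * Y N k = 0"
  shows "N = wedge (vec n (\<lambda>k. s * M $$ (p, k) + t * M $$ (q, k)))
    (vec n (\<lambda>l. (Y N l + N $$ (p, q) * M $$ (q, l)) / s))" (is "N = wedge ?u ?v")
proof (rule eq_matI)
  fix k l assume "k < dim_row (wedge ?u ?v)" "l < dim_col (wedge ?u ?v)"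
  hence kl: "k < n" "l < n" by auto
  have tY: "t * Y N j = - (s * X N j)" if "j < n" for j
    using dep that by (metis neg_eq_iff_add_eq_0)
  have "s * wedge ?u ?v $$ (k, l)
      = ?u $ k * (Y N l + N $$ (p, q) * M $$ (q, l)) - ?u $ l * (Y N k + N $$ (p, q) * M $$ (q, k))"
    using kl s by (simp add: field_simps)
  also have "\<dots> = s * (M $$ (p, k) * Y N l - M $$ (p, l) * Y N k
        + N $$ (p, q) * (M $$ (p, k) * M $$ (q, l) - M $$ (p, l) * M $$ (q, k)))
      + M $$ (q, k) * (t * Y N l) - M $$ (q, l) * (t * Y N k)"
    using kl by (simp add: algebra_simps)
  also have "\<dots> = s * N $$ (k, l)"
    unfolding tY[OF kl(1)] tY[OF kl(2)] decomposition_wedge_rows[OF N kl] by (simp add: algebra_simps)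
  finally show "N $$ (k, l) = wedge ?u ?v $$ (k, l)" using s by simp
qed (use N carrier in auto)

lemma eq_wedge_if_Y_zero:
  assumes N: "N \<in> S" and t: "t \<noteq> 0" and Y: "\<forall>k<n. Y N k = 0"
  shows "N = wedge (vec n (\<lambda>k. t * M $$ (q, k))) (vec n (\<lambda>l. - (X N l + N $$ (p, q) * M $$ (p, l)) / t))"
    (is "N = wedge ?u ?v")
proof (rule eq_matI)
  fix k l assume "k < dim_row (wedge ?u ?v)" "l < dim_col (wedge ?u ?v)"
  hence kl: "k < n" "l < n" by auto
  have "wedge ?u ?v $$ (k, l)
      = M $$ (q, l) * (X N k + N $$ (p, q) * M $$ (p, k)) - M $$ (q, k) * (X N l + N $$ (p, q) * M $$ (p, l))"
    using kl t by (simp add: field_simps)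
  thus "N $$ (k, l) = wedge ?u ?v $$ (k, l)"
    unfolding decomposition_wedge_rows[OF N kl] using Y kl by (simp add: algebra_simps)
qed (use N carrier in auto)

lemma wedge_family_if_dependent:
  assumes st: "s \<noteq> 0 \<or> t \<noteq> 0" and dep: "\<forall>N\<in>S. \<forall>k<n. s * X N k + t * Y N k = 0"
  shows "\<exists>u\<in>carrier_vec n. u \<noteq> 0\<^sub>v n \<and> (\<forall>N\<in>S. \<exists>v\<in>carrier_vec n. N = wedge u v)"
proof -
  define u where "u = vec n (\<lambda>k. s * M $$ (p, k) + t * M $$ (q, k))"
  have "u $ p = - t" "u $ q = s"
    unfolding u_def using p q M_pq diag[OF M p] diag[OF M q] skew[OF M q p] by simp_all
  hence "u \<noteq> 0\<^sub>v n" using st p q by auto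
  moreover have "\<exists>v\<in>carrier_vec n. N = wedge u v" if N: "N \<in> S" for N
  proof (cases "s = 0")
    case False
    have "\<forall>k<n. s * X N k + t * Y N k = 0" using dep N by blast
    thus ?thesis using eq_wedge_if_dependent[OF N False] vec_carrier unfolding u_def by blast
  next
    case True
    hence t: "t \<noteq> 0" and Y: "\<forall>k<n. Y N k = 0" using st dep N by auto
    have "u = vec n (\<lambda>k. t * M $$ (q, k))" unfolding u_def True by simp
    thus ?thesis using eq_wedge_if_Y_zero[OF N t Y] vec_carrier by blast
  qed
  ultimately show ?thesis unfolding u_def by auto
qed

lemma combinations_of_three_if_common_line:
  assumes line: "\<forall>N\<in>S. \<exists>\<alpha> \<beta>. \<forall>k<n. X N k = \<alpha> * y k \<and> Y N k = \<beta> * y k"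
  shows "\<exists>A1 A2 A3. A1 \<in> carrier_mat n n \<and> A2 \<in> carrier_mat n n \<and> A3 \<in> carrier_mat n n \<and>
    (\<forall>N\<in>S. \<exists>a b c. N = a \<cdot>\<^sub>m A1 + b \<cdot>\<^sub>m A2 + c \<cdot>\<^sub>m A3)"
proof -
  let ?A1 = "wedge (row M p) (vec n y)" and ?A2 = "wedge (vec n y) (row M q)"
  have Mc: "M \<in> carrier_mat n n" using M carrier by auto
  have "N = \<beta> \<cdot>\<^sub>m ?A1 + \<alpha> \<cdot>\<^sub>m ?A2 + N $$ (p, q) \<cdot>\<^sub>m M"
    if N: "N \<in> S" and \<alpha>\<beta>: "\<forall>k<n. X N k = \<alpha> * y k \<and> Y N k = \<beta> * y k" for N \<alpha> \<beta>
  proof (rule eq_matI)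
    fix k l assume "k < dim_row (\<beta> \<cdot>\<^sub>m ?A1 + \<alpha> \<cdot>\<^sub>m ?A2 + N $$ (p, q) \<cdot>\<^sub>m M)"
      "l < dim_col (\<beta> \<cdot>\<^sub>m ?A1 + \<alpha> \<cdot>\<^sub>m ?A2 + N $$ (p, q) \<cdot>\<^sub>m M)"
    hence kl: "k < n" "l < n" using Mc by auto
    show "N $$ (k, l) = (\<beta> \<cdot>\<^sub>m ?A1 + \<alpha> \<cdot>\<^sub>m ?A2 + N $$ (p, q) \<cdot>\<^sub>m M) $$ (k, l)"
      unfolding decomposition[OF N kl] using kl p q Mc \<alpha>\<beta> by (simp add: algebra_simps)
  qed (use N Mc carrier in auto)
  hence "\<forall>N\<in>S. \<exists>a b c. N = a \<cdot>\<^sub>m ?A1 + b \<cdot>\<^sub>m ?A2 + c \<cdot>\<^sub>m M" using line by metis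
  moreover have "?A1 \<in> carrier_mat n n" "?A2 \<in> carrier_mat n n" using Mc by auto
  ultimately show ?thesis using Mc by blast
qed

end

theorem (in alternating_pluecker_space) wedge_family_or_combinations_of_three:
  "(\<exists>u\<in>carrier_vec n. u \<noteq> 0\<^sub>v n \<and> (\<forall>N\<in>S. \<exists>v\<in>carrier_vec n. N = wedge u v))
    \<or> (\<exists>A1 A2 A3. A1 \<in> carrier_mat n n \<and> A2 \<in> carrier_mat n n \<and> A3 \<in> carrier_mat n n \<and>
        (\<forall>N\<in>S. \<exists>a b c. N = a \<cdot>\<^sub>m A1 + b \<cdot>\<^sub>m A2 + c \<cdot>\<^sub>m A3))"
proof (cases "\<exists>M0\<in>S. \<exists>p<n. \<exists>q<n. M0 $$ (p, q) \<noteq> 0")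
  case False
  have "N = 0 \<cdot>\<^sub>m 0\<^sub>m n n + 0 \<cdot>\<^sub>m 0\<^sub>m n n + 0 \<cdot>\<^sub>m 0\<^sub>m n n" if "N \<in> S" for N
    using False that carrier by (intro eq_matI) auto
  hence "\<forall>N\<in>S. \<exists>a b c. N = a \<cdot>\<^sub>m 0\<^sub>m n n + b \<cdot>\<^sub>m 0\<^sub>m n n + c \<cdot>\<^sub>m 0\<^sub>m n n" by blast
  thus ?thesis using zero_carrier_mat by blast
next
  case True
  then obtain M0 p q where M0: "M0 \<in> S" "p < n" "q < n" "M0 $$ (p, q) \<noteq> 0" by blast
  interpret normalized_pluecker_space n S "(1 / M0 $$ (p, q)) \<cdot>\<^sub>m M0" p q
    using M0 smult_closed carrier by unfold_locales auto
  from pairs.common_relation_or_common_line show ?thesis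
    using wedge_family_if_dependent combinations_of_three_if_common_line by blast
qed


lemma (in vectorspace) fin_dim_subspace:
  assumes X: "subspace K X V" and fd: "fin_dim"
  shows "vectorspace.fin_dim K (vs X)"
proof -
  interpret X: vectorspace K "vs X" using subspace_is_vs[OF X] .
  have subm: "submodule K X V" using X by (simp add: subspace_def)
  have XV: "X \<subseteq> carrier V" using subm by (simp add: submodule_def)
  define P where "P B = (B \<subseteq> X \<and> lin_indpt B)" for B
  have "finite B \<and> card B \<le> dim" if "P B" for B
    using li_le_dim[OF fd] that XV unfolding P_def by blast
  moreover have "P {}" unfolding P_def lin_dep_def by auto
  ultimately obtain B where B: "finite B" "maximal B P" using maximal_exists[of P dim "{}"] by blast
  have "maximal B (\<lambda>B. B \<subseteq> carrier (vs X) \<and> X.lin_indpt B)"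
    using B(2) span_li_not_depend(2)[OF _ subm] unfolding maximal_def P_def by auto
  hence "X.gen_set B" by (rule X.max_li_is_gen)
  moreover have "B \<subseteq> carrier (vs X)" using B(2) unfolding maximal_def P_def by auto
  ultimately show ?thesis unfolding X.fin_dim_def using B(1) by blast
qed

lemma (in vectorspace) dim_le_card_if_subset_span:
  assumes X: "subspace K X V" and G: "G \<subseteq> carrier V" "finite G" and XG: "X \<subseteq> span G"
  shows "vectorspace.dim K (vs X) \<le> card G"
proof -
  have T: "subspace K (span G) V" by (rule span_is_subspace[OF G(1)])
  interpret T: vectorspace K "vs (span G)" using subspace_is_vs[OF T] .
  have GT: "G \<subseteq> span G" by (rule in_own_span[OF G(1)])
  have "T.gen_set G"
    using span_li_not_depend(1)[OF GT] T by (simp add: subspace_def)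
  hence fd: "T.fin_dim" and "T.dim \<le> card G"
    using GT G(2) T.gen_ge_dim[of G] unfolding T.fin_dim_def by auto
  moreover have XT: "subspace K X (vs (span G))" by (rule nested_subspaces[OF T X XG])
  ultimately show ?thesis
    using T.subspace_dim[OF XT fd T.fin_dim_subspace[OF XT fd]] by simp
qed

lemma dim_le_3_if_combinations_of_three:
  fixes S :: "'a::field mat set"
  assumes S: "subspace class_ring S (module_mat TYPE('a) n n)"
    and A: "A1 \<in> carrier_mat n n" "A2 \<in> carrier_mat n n" "A3 \<in> carrier_mat n n"
    and comb: "\<forall>N\<in>S. \<exists>a b c. N = a \<cdot>\<^sub>m A1 + b \<cdot>\<^sub>m A2 + c \<cdot>\<^sub>m A3"
  shows "vectorspace.dim class_ring ((module_mat TYPE('a) n n)\<lparr>carrier := S\<rparr>) \<le> 3"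
proof -
  let ?V = "module_mat TYPE('a) n n"
  interpret V: vectorspace class_ring ?V by (rule matrix_vs)
  have G: "{A1, A2, A3} \<subseteq> carrier ?V" using A by (simp add: module_mat_simps)
  have span: "submodule class_ring (V.span {A1, A2, A3}) ?V" by (rule V.span_is_submodule[OF G])
  have "A1 \<in> V.span {A1, A2, A3}" "A2 \<in> V.span {A1, A2, A3}" "A3 \<in> V.span {A1, A2, A3}"
    using V.in_own_span[OF G] by auto
  hence "a \<odot>\<^bsub>?V\<^esub> A1 \<oplus>\<^bsub>?V\<^esub> b \<odot>\<^bsub>?V\<^esub> A2 \<oplus>\<^bsub>?V\<^esub> c \<odot>\<^bsub>?V\<^esub> A3 \<in> V.span {A1, A2, A3}" for a b c
    using span by (simp add: submodule.m_closed submodule.smult_closed class_ring_simps)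
  hence "S \<subseteq> V.span {A1, A2, A3}" using comb by (force simp: module_mat_simps)
  hence "vectorspace.dim class_ring (V.vs S) \<le> card {A1, A2, A3}"
    using V.dim_le_card_if_subset_span[OF S G] by simp
  also have "\<dots> \<le> 3" by (simp add: card_insert_le_m1)
  finally show ?thesis .
qed

lemma alternating_pluecker_space_if_rank_le_2:
  fixes S :: "'a::field mat set"
  assumes alt: "S \<subseteq> alt_mats n" and S: "subspace class_ring S (module_mat TYPE('a) n n)"
    and rk: "\<forall>M\<in>S. vec_space.rank n M \<le> 2"
  shows "alternating_pluecker_space n S"
proof
  have subm: "submodule class_ring S (module_mat TYPE('a) n n)" using S by (simp add: subspace_def)
  show "A + B \<in> S" if "A \<in> S" "B \<in> S" for A B
    using submodule.m_closed[OF subm] that by (simp add: module_mat_simps)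
  show "c \<cdot>\<^sub>m A \<in> S" if "A \<in> S" for A c
    using submodule.smult_closed[OF subm] that by (simp add: module_mat_simps class_ring_simps)
  show "S \<subseteq> carrier_mat n n" using alt unfolding alt_mats_def by auto
  show "A $$ (i, j) = - A $$ (j, i)" if "A \<in> S" "i < n" "j < n" for A i j
    using alt that unfolding alt_mats_def by blast
  show "A $$ (i, i) = 0" if "A \<in> S" "i < n" for A i
    using alt that unfolding alt_mats_def by blast
  show "A $$ (i, j) * A $$ (k, l) - A $$ (i, k) * A $$ (j, l) + A $$ (i, l) * A $$ (j, k) = 0"
    if "A \<in> S" "i < n" "j < n" "k < n" "l < n" for A i j k l
    using alternating_rank_le_2_pluecker[of A n] alt rk that by blast
qed

theorem proposition1p5:
  fixes n :: nat and S :: "'a::field mat set"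
  assumes "n > 0"
    and "S \<subseteq> alt_mats n"
    and "subspace class_ring S (module_mat TYPE('a) n n)"
    and "vectorspace.dim class_ring ((module_mat TYPE('a) n n)\<lparr>carrier := S\<rparr>) > 3"
    and "\<forall>M \<in> S. vec_space.rank n M \<le> 2"
  shows "\<exists>W. W \<subseteq> WA_11 n \<and> congruent_sets n S W"
proof -
  interpret alternating_pluecker_space n S
    using alternating_pluecker_space_if_rank_le_2 assms(2,3,5) .
  from wedge_family_or_combinations_of_three show ?thesis
  proof
    assume "\<exists>u\<in>carrier_vec n. u \<noteq> 0\<^sub>v n \<and> (\<forall>N\<in>S. \<exists>v\<in>carrier_vec n. N = wedge u v)"
    thus ?thesis using congruent_to_WA_11_if_wedge_family by blast
  next
    assume "\<exists>A1 A2 A3. A1 \<in> carrier_mat n n \<and> A2 \<in> carrier_mat n n \<and> A3 \<in> carrier_mat n n \<and>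
      (\<forall>N\<in>S. \<exists>a b c. N = a \<cdot>\<^sub>m A1 + b \<cdot>\<^sub>m A2 + c \<cdot>\<^sub>m A3)"
    hence "vectorspace.dim class_ring ((module_mat TYPE('a) n n)\<lparr>carrier := S\<rparr>) \<le> 3"
      using dim_le_3_if_combinations_of_three[OF assms(3)] by blast
    thus ?thesis using assms(4) by simp
  qed
qed

end
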